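(* Let $P:\mathcal{C}^{\mathrm{op}}\to\mathbf{Hey}$ be a Gödel hyperdoctrine. Let $A,B$ be objects of $\mathcal{C}$, let $\beta_D\in P(A)$ be a quantifier-free predicate and let $\alpha\in P(A\times B)$ be an existential-free predicate. If \[ a:A\;|\;\top\vdash(\forall b.\alpha(a,b))\rightarrow\beta_D(a),\] then \[ a:A\;|\;\top\vdash\exists b.(\alpha(a,b)\rightarrow\beta_D(a)).\]
   Context: A hyperdoctrine is a functor $P:\mathcal{C}^{\mathrm{op}}\to\mathbf{Hey}$ from a cartesian closed category $\mathcal{C}$ to Heyting algebras such that each $P_f$ has a left adjoint $\exists_f$ and a right adjoint $\forall_f$ satisfying Beck–Chevalley. A Gödel hyperdoctrine is a hyperdoctrine which (as a functor to $\mathbf{Pos}$) is a Gödel doctrine. A doctrine $P:\mathcal{C}^{\mathrm{op}}\to\mathbf{Pos}$ ($\mathcal{C}$ with finite products) is existential/universal if reindexing along each product projection $\pi$ has a left adjoint $\exists_\pi$ / right adjoint $\forall_\pi$ satisfying Beck–Chevalley along pullbacks of projections. Notation: $a:A\;|\;\phi\vdash\psi$ means $\phi\le\psi$ in $P(A)$; $\exists b.\psi(a,b)=\exists_{\pi_A}\psi$, $\forall b.\psi(a,b)=\forall_{\pi_A}\psi$; $\top,\rightarrow$ are Heyting operations; substitution is reindexing. In an existential doctrine, $\alpha\in P(I)$ is existential-free if for every $f:A\to I$, every $B$ and every $\beta\in P(A\times B)$ with $P_f\alpha\le\exists_{\pi_A}\beta$ there is $g:A\to B$ with $P_f\alpha\le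 P_{\langle1_A,g\rangle}\beta$. In a universal doctrine $Q$, $\alpha\in Q(I)$ is universal-free if for every $f:A\to I$, every $B$ and every $\beta\in Q(A\times B)$ with $\forall_{\pi_A}\beta\le Q_f\alpha$ there is $g:A\to B$ with $Q_{\langle1_A,g\rangle}\beta\le Q_f\alpha$. Enough existential-free (universal-free) predicates: every $\alpha\in P(I)$ equals $\exists_{\pi_I}\beta$ (resp. $\forall_{\pi_I}\beta$) for some $A$ and existential-free (universal-free) $\beta\in P(I\times A)$. A Gödel doctrine: (1) $\mathcal{C}$ cartesian closed; (2) $P$ existential and universal; (3) $P$ has enough existential-free predicates; (4) existential-free predicates are stable under $\forall_\pi$ for projections $\pi$; (5) the sub-doctrine $P'$ of existential-free predicates (a universal doctrine) has enough universal-free predicates. A predicate is quantifier-free if it is existential-free in $P$ and universal-free in $P'$. *)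

theory Defs
  imports Main
begin

text \<open>Objects form the type 'o, arrows the type 'm. Composition Comp g f is g after f.
  Products A x B are chosen (Prod, Pi1, Pi2), with a chosen terminal object Term.\<close>

record ('o, 'm) cat =
  Dom  :: "'m \<Rightarrow> 'o"
  Cod  :: "'m \<Rightarrow> 'o"
  Comp :: "'m \<Rightarrow> 'm \<Rightarrow> 'm"
  Id   :: "'o \<Rightarrow> 'm"
  Prod :: "'o \<Rightarrow> 'o \<Rightarrow> 'o"
  Pi1  :: "'o \<Rightarrow> 'o \<Rightarrow> 'm"
  Pi2  :: "'o \<Rightarrow> 'o \<Rightarrow> 'm"
  Term :: "'o"

definition arr :: "('o, 'm, 'x) cat_scheme \<Rightarrow> 'm \<Rightarrow> 'o \<Rightarrow> 'o \<Rightarrow> bool" where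
  "arr C f X Y \<longleftrightarrow> Dom C f = X \<and> Cod C f = Y"

definition category :: "('o, 'm, 'x) cat_scheme \<Rightarrow> bool" where
  "category C \<longleftrightarrow>
     (\<forall>A. arr C (Id C A) A A) \<and>
     (\<forall>f g. Cod C f = Dom C g \<longrightarrow> arr C (Comp C g f) (Dom C f) (Cod C g)) \<and>
     (\<forall>f. Comp C f (Id C (Dom C f)) = f \<and> Comp C (Id C (Cod C f)) f = f) \<and>
     (\<forall>f g h. Cod C f = Dom C g \<longrightarrow> Cod C g = Dom C h \<longrightarrow>
        Comp C h (Comp C g f) = Comp C (Comp C h g) f)"

definition has_finite_products :: "('o, 'm, 'x) cat_scheme \<Rightarrow> bool" where
  "has_finite_products C \<longleftrightarrow>
     (\<forall>A. \<exists>!t. arr C t A (Term C)) \<and>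
     (\<forall>A B. arr C (Pi1 C A B) (Prod C A B) A \<and> arr C (Pi2 C A B) (Prod C A B) B \<and>
        (\<forall>X f g. arr C f X A \<longrightarrow> arr C g X B \<longrightarrow>
           (\<exists>!h. arr C h X (Prod C A B) \<and> Comp C (Pi1 C A B) h = f \<and> Comp C (Pi2 C A B) h = g)))"

definition pair :: "('o, 'm, 'x) cat_scheme \<Rightarrow> 'm \<Rightarrow> 'm \<Rightarrow> 'm" where
  "pair C f g = (THE h. arr C h (Dom C f) (Prod C (Cod C f) (Cod C g)) \<and>
       Comp C (Pi1 C (Cod C f) (Cod C g)) h = f \<and> Comp C (Pi2 C (Cod C f) (Cod C g)) h = g)"

definition cartesian_closed :: "('o, 'm, 'x) cat_scheme \<Rightarrow> bool" where
  "cartesian_closed C \<longleftrightarrow> category C \<and> has_finite_products C \<and>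
     (\<forall>A B. \<exists>E ev. arr C ev (Prod C E A) B \<and>
        (\<forall>X f. arr C f (Prod C X A) B \<longrightarrow>
           (\<exists>!g. arr C g X E \<and>
              Comp C ev (pair C (Comp C g (Pi1 C X A)) (Pi2 C X A)) = f)))"

definition pullback :: "('o, 'm, 'x) cat_scheme \<Rightarrow> 'm \<Rightarrow> 'm \<Rightarrow> 'm \<Rightarrow> 'm \<Rightarrow> bool" where
  "pullback C f g p q \<longleftrightarrow>
     Cod C f = Cod C g \<and> Dom C p = Dom C q \<and> Cod C p = Dom C f \<and> Cod C q = Dom C g \<and>
     Comp C f p = Comp C g q \<and>
     (\<forall>u v. Dom C u = Dom C v \<longrightarrow> Cod C u = Dom C f \<longrightarrow> Cod C v = Dom C g \<longrightarrow>
        Comp C f u = Comp C g v \<longrightarrow>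
        (\<exists>!h. arr C h (Dom C u) (Dom C p) \<and> Comp C p h = u \<and> Comp C q h = v))"

text \<open>Pred A is the fibre P(A); Le A its order; Re f is reindexing P_f : P(Cod f) \<rightarrow> P(Dom f);
  Top, Bot, Meet, Join, Imp are the Heyting operations of each fibre; Ex f and All f are
  the left and right adjoints of Re f.\<close>

record ('o, 'm, 'p) hdoc =
  Pred :: "'o \<Rightarrow> 'p set"
  Le   :: "'o \<Rightarrow> 'p \<Rightarrow> 'p \<Rightarrow> bool"
  Re   :: "'m \<Rightarrow> 'p \<Rightarrow> 'p"
  Top  :: "'o \<Rightarrow> 'p"
  Bot  :: "'o \<Rightarrow> 'p"
  Meet :: "'o \<Rightarrow> 'p \<Rightarrow> 'p \<Rightarrow> 'p"
  Join :: "'o \<Rightarrow> 'p \<Rightarrow> 'p \<Rightarrow> 'p"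
  Imp  :: "'o \<Rightarrow> 'p \<Rightarrow> 'p \<Rightarrow> 'p"
  Ex   :: "'m \<Rightarrow> 'p \<Rightarrow> 'p"
  All  :: "'m \<Rightarrow> 'p \<Rightarrow> 'p"

definition heyting_fibre :: "('o, 'm, 'p, 'x) hdoc_scheme \<Rightarrow> 'o \<Rightarrow> bool" where
  "heyting_fibre P A \<longleftrightarrow>
     (\<forall>a\<in>Pred P A. Le P A a a) \<and>
     (\<forall>a\<in>Pred P A. \<forall>b\<in>Pred P A. Le P A a b \<longrightarrow> Le P A b a \<longrightarrow> a = b) \<and>
     (\<forall>a\<in>Pred P A. \<forall>b\<in>Pred P A. \<forall>c\<in>Pred P A. Le P A a b \<longrightarrow> Le P A b c \<longrightarrow> Le P A a c) \<and>
     Top P A \<in> Pred P A \<and> (\<forall>a\<in>Pred P A. Le P A a (Top P A)) \<and>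
     Bot P A \<in> Pred P A \<and> (\<forall>a\<in>Pred P A. Le P A (Bot P A) a) \<and>
     (\<forall>a\<in>Pred P A. \<forall>b\<in>Pred P A.
        Meet P A a b \<in> Pred P A \<and> Join P A a b \<in> Pred P A \<and> Imp P A a b \<in> Pred P A \<and>
        (\<forall>c\<in>Pred P A. Le P A c (Meet P A a b) \<longleftrightarrow> Le P A c a \<and> Le P A c b) \<and>
        (\<forall>c\<in>Pred P A. Le P A (Join P A a b) c \<longleftrightarrow> Le P A a c \<and> Le P A b c) \<and>
        (\<forall>c\<in>Pred P A. Le P A c (Imp P A a b) \<longleftrightarrow> Le P A (Meet P A c a) b))"

definition heyting_functor :: "('o, 'm, 'y) cat_scheme \<Rightarrow> ('o, 'm, 'p, 'x) hdoc_scheme \<Rightarrow> bool" where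
  "heyting_functor C P \<longleftrightarrow>
     (\<forall>A. heyting_fibre P A) \<and>
     (\<forall>A. \<forall>a\<in>Pred P A. Re P (Id C A) a = a) \<and>
     (\<forall>f g. Cod C f = Dom C g \<longrightarrow> (\<forall>a\<in>Pred P (Cod C g).
        Re P (Comp C g f) a = Re P f (Re P g a))) \<and>
     (\<forall>f. let X = Dom C f; Y = Cod C f in
        (\<forall>a\<in>Pred P Y. Re P f a \<in> Pred P X) \<and>
        (\<forall>a\<in>Pred P Y. \<forall>b\<in>Pred P Y. Le P Y a b \<longrightarrow> Le P X (Re P f a) (Re P f b)) \<and>
        Re P f (Top P Y) = Top P X \<and> Re P f (Bot P Y) = Bot P X \<and>
        (\<forall>a\<in>Pred P Y. \<forall>b\<in>Pred P Y.
           Re P f (Meet P Y a b) = Meet P X (Re P f a) (Re P f b) \<and>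
           Re P f (Join P Y a b) = Join P X (Re P f a) (Re P f b) \<and>
           Re P f (Imp P Y a b) = Imp P X (Re P f a) (Re P f b)))"

definition hyperdoctrine :: "('o, 'm, 'y) cat_scheme \<Rightarrow> ('o, 'm, 'p, 'x) hdoc_scheme \<Rightarrow> bool" where
  "hyperdoctrine C P \<longleftrightarrow>
     cartesian_closed C \<and> heyting_functor C P \<and>
     (\<forall>f. let X = Dom C f; Y = Cod C f in
        (\<forall>a\<in>Pred P X. Ex P f a \<in> Pred P Y \<and> All P f a \<in> Pred P Y \<and>
           (\<forall>b\<in>Pred P Y. Le P Y (Ex P f a) b \<longleftrightarrow> Le P X a (Re P f b)) \<and>
           (\<forall>b\<in>Pred P Y. Le P Y b (All P f a) \<longleftrightarrow> Le P X (Re P f b) a))) \<and>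
     (\<forall>f g p q. pullback C f g p q \<longrightarrow> (\<forall>a\<in>Pred P (Dom C f).
        Re P g (Ex P f a) = Ex P q (Re P p a) \<and> Re P g (All P f a) = All P q (Re P p a)))"

definition ex_free :: "('o, 'm, 'y) cat_scheme \<Rightarrow> ('o, 'm, 'p, 'x) hdoc_scheme \<Rightarrow> 'o \<Rightarrow> 'p \<Rightarrow> bool" where
  "ex_free C P I \<alpha> \<longleftrightarrow> \<alpha> \<in> Pred P I \<and>
     (\<forall>A f B \<beta>. arr C f A I \<longrightarrow> \<beta> \<in> Pred P (Prod C A B) \<longrightarrow>
        Le P A (Re P f \<alpha>) (Ex P (Pi1 C A B) \<beta>) \<longrightarrow>
        (\<exists>g. arr C g A B \<and> Le P A (Re P f \<alpha>) (Re P (pair C (Id C A) g) \<beta>)))"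

text \<open>Universal-free in the sub-doctrine P' of existential-free predicates.\<close>
definition univ_free' :: "('o, 'm, 'y) cat_scheme \<Rightarrow> ('o, 'm, 'p, 'x) hdoc_scheme \<Rightarrow> 'o \<Rightarrow> 'p \<Rightarrow> bool" where
  "univ_free' C P I \<alpha> \<longleftrightarrow> ex_free C P I \<alpha> \<and>
     (\<forall>A f B \<beta>. arr C f A I \<longrightarrow> ex_free C P (Prod C A B) \<beta> \<longrightarrow>
        Le P A (All P (Pi1 C A B) \<beta>) (Re P f \<alpha>) \<longrightarrow>
        (\<exists>g. arr C g A B \<and> Le P A (Re P (pair C (Id C A) g) \<beta>) (Re P f \<alpha>)))"

definition quantifier_free :: "('o, 'm, 'y) cat_scheme \<Rightarrow> ('o, 'm, 'p, 'x) hdoc_scheme \<Rightarrow> 'o \<Rightarrow> 'p \<Rightarrow> bool" where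
  "quantifier_free C P I \<alpha> \<longleftrightarrow> ex_free C P I \<alpha> \<and> univ_free' C P I \<alpha>"

text \<open>Goedel hyperdoctrine: conditions (1),(2) follow from being a hyperdoctrine
  (cartesian closed base, adjoints along all arrows, in particular projections, with
  Beck-Chevalley along all pullbacks); (3)-(5) are stated explicitly.\<close>
definition goedel_hyperdoctrine :: "('o, 'm, 'y) cat_scheme \<Rightarrow> ('o, 'm, 'p, 'x) hdoc_scheme \<Rightarrow> bool" where
  "goedel_hyperdoctrine C P \<longleftrightarrow> hyperdoctrine C P \<and>
     (\<forall>I. \<forall>\<alpha>\<in>Pred P I. \<exists>A \<beta>. ex_free C P (Prod C I A) \<beta> \<and> \<alpha> = Ex P (Pi1 C I A) \<beta>) \<and>
     (\<forall>A B \<beta>. ex_free C P (Prod C A B) \<beta> \<longrightarrow> ex_free C P A (All P (Pi1 C A B) \<beta>)) \<and>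
     (\<forall>I \<alpha>. ex_free C P I \<alpha> \<longrightarrow>
        (\<exists>A \<beta>. univ_free' C P (Prod C I A) \<beta> \<and> \<alpha> = All P (Pi1 C I A) \<beta>))"

end

theory Submission
  imports Defs
begin

text \<open>From \<open>\<top> \<turnstile> (\<forall>b. \<alpha>(a,b)) \<rightarrow> \<beta>\<^sub>D(a)\<close> we get \<open>\<forall>b. \<alpha>(a,b) \<turnstile> \<beta>\<^sub>D(a)\<close>. Since \<open>\<alpha>\<close> is
  existential-free and \<open>\<beta>\<^sub>D\<close> is universal-free in the sub-doctrine of existential-free
  predicates, there is an arrow \<open>g : A \<rightarrow> B\<close> with \<open>\<alpha>(a, g a) \<turnstile> \<beta>\<^sub>D(a)\<close>, i.e.
  \<open>\<top> \<turnstile> \<alpha>(a, g a) \<rightarrow> \<beta>\<^sub>D(a)\<close>. Reindexing along the section \<open>\<langle>1,g\<rangle>\<close> of the projection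
  is below \<open>\<exists>b\<close>, so \<open>b := g a\<close> witnesses the existential.\<close>

lemma heyting_fibre_refl:
  "heyting_fibre P A \<Longrightarrow> a \<in> Pred P A \<Longrightarrow> Le P A a a"
  unfolding heyting_fibre_def by meson

lemma heyting_fibre_antisym:
  "heyting_fibre P A \<Longrightarrow> a \<in> Pred P A \<Longrightarrow> b \<in> Pred P A \<Longrightarrow> Le P A a b \<Longrightarrow> Le P A b a \<Longrightarrow> a = b"
  unfolding heyting_fibre_def by meson

lemma heyting_fibre_trans:
  "heyting_fibre P A \<Longrightarrow> a \<in> Pred P A \<Longrightarrow> b \<in> Pred P A \<Longrightarrow> c \<in> Pred P A \<Longrightarrow>
    Le P A a b \<Longrightarrow> Le P A b c \<Longrightarrow> Le P A a c"
  unfolding heyting_fibre_def by meson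

lemma heyting_fibre_Top:
  "heyting_fibre P A \<Longrightarrow> Top P A \<in> Pred P A"
  unfolding heyting_fibre_def by meson

lemma heyting_fibre_le_Top:
  "heyting_fibre P A \<Longrightarrow> a \<in> Pred P A \<Longrightarrow> Le P A a (Top P A)"
  unfolding heyting_fibre_def by meson

lemma heyting_fibre_Meet:
  "heyting_fibre P A \<Longrightarrow> a \<in> Pred P A \<Longrightarrow> b \<in> Pred P A \<Longrightarrow> Meet P A a b \<in> Pred P A"
  unfolding heyting_fibre_def by meson

lemma heyting_fibre_Imp:
  "heyting_fibre P A \<Longrightarrow> a \<in> Pred P A \<Longrightarrow> b \<in> Pred P A \<Longrightarrow> Imp P A a b \<in> Pred P A"
  unfolding heyting_fibre_def by meson

lemma heyting_fibre_le_Meet_iff: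
  "heyting_fibre P A \<Longrightarrow> a \<in> Pred P A \<Longrightarrow> b \<in> Pred P A \<Longrightarrow> c \<in> Pred P A \<Longrightarrow>
    Le P A c (Meet P A a b) \<longleftrightarrow> Le P A c a \<and> Le P A c b"
  unfolding heyting_fibre_def by meson

lemma heyting_fibre_le_Imp_iff:
  "heyting_fibre P A \<Longrightarrow> a \<in> Pred P A \<Longrightarrow> b \<in> Pred P A \<Longrightarrow> c \<in> Pred P A \<Longrightarrow>
    Le P A c (Imp P A a b) \<longleftrightarrow> Le P A (Meet P A c a) b"
  unfolding heyting_fibre_def by meson

lemma heyting_fibre_Top_Meet:
  assumes fib: "heyting_fibre P A" and a: "a \<in> Pred P A"
  shows "Meet P A (Top P A) a = a"
proof -
  note top = heyting_fibre_Top[OF fib]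
  note meet = heyting_fibre_Meet[OF fib top a]
  have "Le P A (Meet P A (Top P A) a) a"
    using heyting_fibre_le_Meet_iff[OF fib top a meet] heyting_fibre_refl[OF fib meet] by simp
  moreover have "Le P A a (Meet P A (Top P A) a)"
    using heyting_fibre_le_Meet_iff[OF fib top a a] heyting_fibre_refl[OF fib a]
      heyting_fibre_le_Top[OF fib a] by simp
  ultimately show ?thesis
    using heyting_fibre_antisym[OF fib meet a] by simp
qed

lemma heyting_fibre_Top_le_Imp_iff:
  assumes fib: "heyting_fibre P A" and a: "a \<in> Pred P A" and b: "b \<in> Pred P A"
  shows "Le P A (Top P A) (Imp P A a b) \<longleftrightarrow> Le P A a b"
  using heyting_fibre_le_Imp_iff[OF fib a b heyting_fibre_Top[OF fib]]
    heyting_fibre_Top_Meet[OF fib a] by simp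

lemma arr_Id:
  "category C \<Longrightarrow> arr C (Id C A) A A"
  unfolding category_def by meson

lemma arr_Pi1:
  "has_finite_products C \<Longrightarrow> arr C (Pi1 C A B) (Prod C A B) A"
  unfolding has_finite_products_def by meson

lemma pair_spec:
  assumes "has_finite_products C" "arr C f X A" "arr C g X B"
  shows "arr C (pair C f g) X (Prod C A B) \<and>
    Comp C (Pi1 C A B) (pair C f g) = f \<and> Comp C (Pi2 C A B) (pair C f g) = g"
proof -
  have "\<forall>X f g. arr C f X A \<longrightarrow> arr C g X B \<longrightarrow>
      (\<exists>!h. arr C h X (Prod C A B) \<and> Comp C (Pi1 C A B) h = f \<and> Comp C (Pi2 C A B) h = g)"
    using assms(1) by (simp add: has_finite_products_def)
  with assms(2,3)
  have "\<exists>!h. arr C h X (Prod C A B) \<and> Comp C (Pi1 C A B) h = f \<and> Comp C (Pi2 C A B) h = g"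
    by blast
  moreover have "Dom C f = X" "Cod C f = A" "Cod C g = B"
    using assms(2,3) by (simp_all add: arr_def)
  ultimately show ?thesis
    unfolding pair_def by (simp only:) (rule theI')
qed

lemma heyting_functor_fibre:
  "heyting_functor C P \<Longrightarrow> heyting_fibre P A"
  by (simp add: heyting_functor_def)

lemma Re_closed:
  "heyting_functor C P \<Longrightarrow> arr C f X Y \<Longrightarrow> a \<in> Pred P Y \<Longrightarrow> Re P f a \<in> Pred P X"
  by (auto simp: heyting_functor_def Let_def arr_def)

lemma Re_mono:
  "heyting_functor C P \<Longrightarrow> arr C f X Y \<Longrightarrow> a \<in> Pred P Y \<Longrightarrow> b \<in> Pred P Y \<Longrightarrow>
    Le P Y a b \<Longrightarrow> Le P X (Re P f a) (Re P f b)"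
  by (auto simp: heyting_functor_def Let_def arr_def)

lemma Re_Imp:
  "heyting_functor C P \<Longrightarrow> arr C f X Y \<Longrightarrow> a \<in> Pred P Y \<Longrightarrow> b \<in> Pred P Y \<Longrightarrow>
    Re P f (Imp P Y a b) = Imp P X (Re P f a) (Re P f b)"
  by (auto simp: heyting_functor_def Let_def arr_def)

lemma Re_Id:
  "heyting_functor C P \<Longrightarrow> a \<in> Pred P A \<Longrightarrow> Re P (Id C A) a = a"
  by (simp add: heyting_functor_def)

lemma Re_section_cancel:
  assumes F: "heyting_functor C P" and "arr C p X E" and "arr C \<pi> E X"
    and sec: "Comp C \<pi> p = Id C X" and a: "a \<in> Pred P X"
  shows "Re P p (Re P \<pi> a) = a"
proof -
  have "Re P p (Re P \<pi> a) = Re P (Comp C \<pi> p) a"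
    using F assms(2-) unfolding heyting_functor_def arr_def by metis
  also have "\<dots> = a"
    unfolding sec using Re_Id[OF F a] .
  finally show ?thesis .
qed

lemma hyperdoctrine_heyting_functor:
  "hyperdoctrine C P \<Longrightarrow> heyting_functor C P"
  by (simp add: hyperdoctrine_def)

lemma hyperdoctrine_category:
  "hyperdoctrine C P \<Longrightarrow> category C"
  by (simp add: hyperdoctrine_def cartesian_closed_def)

lemma hyperdoctrine_has_finite_products:
  "hyperdoctrine C P \<Longrightarrow> has_finite_products C"
  by (simp add: hyperdoctrine_def cartesian_closed_def)

lemma Ex_closed:
  "hyperdoctrine C P \<Longrightarrow> arr C f X Y \<Longrightarrow> a \<in> Pred P X \<Longrightarrow> Ex P f a \<in> Pred P Y"
  by (auto simp: hyperdoctrine_def Let_def arr_def)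

lemma All_closed:
  "hyperdoctrine C P \<Longrightarrow> arr C f X Y \<Longrightarrow> a \<in> Pred P X \<Longrightarrow> All P f a \<in> Pred P Y"
  by (auto simp: hyperdoctrine_def Let_def arr_def)

lemma le_Re_Ex:
  assumes H: "hyperdoctrine C P" and f: "arr C f X Y" and a: "a \<in> Pred P X"
  shows "Le P X a (Re P f (Ex P f a))"
proof -
  note ex = Ex_closed[OF H f a]
  have "Le P Y (Ex P f a) (Ex P f a)"
    using heyting_fibre_refl[OF heyting_functor_fibre[OF hyperdoctrine_heyting_functor[OF H]] ex] .
  then show ?thesis
    using H f a ex by (auto simp: hyperdoctrine_def Let_def arr_def)
qed

lemma Re_section_le_Ex:
  assumes H: "hyperdoctrine C P" and p: "arr C p X E" and \<pi>: "arr C \<pi> E X"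
    and sec: "Comp C \<pi> p = Id C X" and \<gamma>: "\<gamma> \<in> Pred P E"
  shows "Le P X (Re P p \<gamma>) (Ex P \<pi> \<gamma>)"
proof -
  note F = hyperdoctrine_heyting_functor[OF H]
  note ex = Ex_closed[OF H \<pi> \<gamma>]
  have "Le P X (Re P p \<gamma>) (Re P p (Re P \<pi> (Ex P \<pi> \<gamma>)))"
    using Re_mono[OF F p \<gamma> Re_closed[OF F \<pi> ex] le_Re_Ex[OF H \<pi> \<gamma>]] .
  then show ?thesis
    unfolding Re_section_cancel[OF F p \<pi> sec ex] .
qed

lemma univ_free'_witness:
  assumes F: "heyting_functor C P" and cat: "category C"
    and "univ_free' C P A \<beta>" "ex_free C P (Prod C A B) \<alpha>"
    and "Le P A (All P (Pi1 C A B) \<alpha>) \<beta>"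
  shows "\<exists>g. arr C g A B \<and> Le P A (Re P (pair C (Id C A) g) \<alpha>) \<beta>"
proof -
  have "Re P (Id C A) \<beta> = \<beta>"
    using Re_Id[OF F] assms(3) by (simp add: univ_free'_def ex_free_def)
  moreover have "\<forall>X f B \<beta>'. arr C f X A \<longrightarrow> ex_free C P (Prod C X B) \<beta>' \<longrightarrow>
      Le P X (All P (Pi1 C X B) \<beta>') (Re P f \<beta>) \<longrightarrow>
      (\<exists>g. arr C g X B \<and> Le P X (Re P (pair C (Id C X) g) \<beta>') (Re P f \<beta>))"
    using assms(3) unfolding univ_free'_def by (rule conjunct2)
  ultimately show ?thesis
    using arr_Id[OF cat] assms(4,5) by metis
qed

lemma Top_le_Ex_Imp_of_witness:
  assumes H: "hyperdoctrine C P" and g: "arr C g A B"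
    and \<alpha>: "\<alpha> \<in> Pred P (Prod C A B)" and \<beta>: "\<beta> \<in> Pred P A"
    and witness: "Le P A (Re P (pair C (Id C A) g) \<alpha>) \<beta>"
  shows "Le P A (Top P A) (Ex P (Pi1 C A B) (Imp P (Prod C A B) \<alpha> (Re P (Pi1 C A B) \<beta>)))"
proof -
  define p where "p = pair C (Id C A) g"
  define \<pi> where "\<pi> = Pi1 C A B"
  define \<gamma> where "\<gamma> = Imp P (Prod C A B) \<alpha> (Re P \<pi> \<beta>)"
  note F = hyperdoctrine_heyting_functor[OF H]
  note fp = hyperdoctrine_has_finite_products[OF H]
  note fibA = heyting_functor_fibre[OF F, of A]
  have \<pi>: "arr C \<pi> (Prod C A B) A"
    unfolding \<pi>_def using arr_Pi1[OF fp] .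
  have p: "arr C p A (Prod C A B)" and sec: "Comp C \<pi> p = Id C A"
    using pair_spec[OF fp arr_Id[OF hyperdoctrine_category[OF H]] g] unfolding p_def \<pi>_def by blast+
  have \<pi>\<beta>: "Re P \<pi> \<beta> \<in> Pred P (Prod C A B)"
    using Re_closed[OF F \<pi> \<beta>] .
  have \<gamma>: "\<gamma> \<in> Pred P (Prod C A B)"
    unfolding \<gamma>_def using heyting_fibre_Imp[OF heyting_functor_fibre[OF F] \<alpha> \<pi>\<beta>] .
  have "Re P p \<gamma> = Imp P A (Re P p \<alpha>) \<beta>"
    unfolding \<gamma>_def using Re_Imp[OF F p \<alpha> \<pi>\<beta>] Re_section_cancel[OF F p \<pi> sec \<beta>] by simp
  then have "Le P A (Top P A) (Re P p \<gamma>)"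
    using heyting_fibre_Top_le_Imp_iff[OF fibA Re_closed[OF F p \<alpha>] \<beta>] witness
    unfolding p_def by simp
  then have "Le P A (Top P A) (Ex P \<pi> \<gamma>)"
    using heyting_fibre_trans[OF fibA heyting_fibre_Top[OF fibA] Re_closed[OF F p \<gamma>]
        Ex_closed[OF H \<pi> \<gamma>]] Re_section_le_Ex[OF H p \<pi> sec \<gamma>] by blast
  then show ?thesis
    unfolding \<gamma>_def \<pi>_def .
qed

theorem theorem6:
  fixes C :: "('o, 'm) cat" and P :: "('o, 'm, 'p) hdoc"
    and A B :: 'o and \<beta>D \<alpha> :: 'p
  assumes "goedel_hyperdoctrine C P"
    and "quantifier_free C P A \<beta>D"
    and "ex_free C P (Prod C A B) \<alpha>"
    and "Le P A (Top P A) (Imp P A (All P (Pi1 C A B) \<alpha>) \<beta>D)"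
  shows "Le P A (Top P A)
           (Ex P (Pi1 C A B) (Imp P (Prod C A B) \<alpha> (Re P (Pi1 C A B) \<beta>D)))"
proof -
  have H: "hyperdoctrine C P"
    using assms(1) by (simp add: goedel_hyperdoctrine_def)
  note F = hyperdoctrine_heyting_functor[OF H]
  have \<alpha>: "\<alpha> \<in> Pred P (Prod C A B)" and \<beta>D: "\<beta>D \<in> Pred P A"
    using assms(2,3) by (simp_all add: quantifier_free_def ex_free_def)
  have "All P (Pi1 C A B) \<alpha> \<in> Pred P A"
    using All_closed[OF H arr_Pi1[OF hyperdoctrine_has_finite_products[OF H]] \<alpha>] .
  then have "Le P A (All P (Pi1 C A B) \<alpha>) \<beta>D"
    using assms(4) heyting_fibre_Top_le_Imp_iff[OF heyting_functor_fibre[OF F] _ \<beta>D] by blast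
  then obtain g where g: "arr C g A B" and "Le P A (Re P (pair C (Id C A) g) \<alpha>) \<beta>D"
    using univ_free'_witness[OF F hyperdoctrine_category[OF H] _ assms(3)] assms(2)
    by (auto simp: quantifier_free_def)
  then show ?thesis
    using Top_le_Ex_Imp_of_witness[OF H g \<alpha> \<beta>D] by blast
qed

end
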